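(* Let $U$ be a Hilbert space, $T: U\rightrightarrows U$, $(\hat u,\hat w)\in\operatorname{graph}T$, $N,M\in\mathcal{L}(U;U)$ with $M\ge0$, and $\gamma\in[0,1]$. Then $(N,\gamma M)$-strong submonotonicity of $T$ at $(\hat u,\hat w)$ implies $(\gamma M, N, M)$-partial strong submonotonicity at the same point. If $T^{-1}(\hat w)=\{\hat u\}$ is a singleton, these two properties are equivalent.
   Context: For $T\in\mathcal{L}(U;U)$: $\langle x,z\rangle_T:=\langle Tx,z\rangle$, $\|x\|^2_T:=\langle Tx,x\rangle$, $\operatorname{dist}^2_T(z,A):=\inf_{u\in A}\|z-u\|^2_T$. For $\Xi,N,M\in\mathcal{L}(U;U)$ with $M\ge0$, $T$ is $(\Xi,N,M)$-partially strongly submonotone at $(\hat u,\hat w)$ if there is a neighbourhood $\mathcal{U}\ni\hat u$ with $\inf_{u^*\in T^{-1}(\hat w)}(\langle w-\hat w,u-u^*\rangle_N + \|u-u^*\|^2_{M-\Xi}) \ge \operatorname{dist}^2_M(u,T^{-1}(\hat w))$ for all $u\in\mathcal{U}$, $w\in T(u)$. $T$ is $(N,M)$-strongly submonotone if it is $(M,N,M)$-partially strongly submonotone. *)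

theory Defs
  imports "HOL-Analysis.Analysis"
begin

definition op_inner :: "('a::real_inner \<Rightarrow> 'a) \<Rightarrow> 'a \<Rightarrow> 'a \<Rightarrow> real" where
  "op_inner T x z = inner (T x) z"

definition op_norm2 :: "('a::real_inner \<Rightarrow> 'a) \<Rightarrow> 'a \<Rightarrow> real" where
  "op_norm2 T x = inner (T x) x"

definition op_dist2 :: "('a::real_inner \<Rightarrow> 'a) \<Rightarrow> 'a \<Rightarrow> 'a set \<Rightarrow> ereal" where
  "op_dist2 T z A = (INF u\<in>A. ereal (op_norm2 T (z - u)))"

definition pos_semidef :: "('a::real_inner \<Rightarrow> 'a) \<Rightarrow> bool" where
  "pos_semidef M \<longleftrightarrow> (\<forall>x. 0 \<le> inner (M x) x)"

definition inv_at :: "('a \<Rightarrow> 'b set) \<Rightarrow> 'b \<Rightarrow> 'a set" where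
  "inv_at T w = {u. w \<in> T u}"

definition partial_strong_submonotone ::
  "('a::real_inner \<Rightarrow> 'a set) \<Rightarrow> ('a \<Rightarrow> 'a) \<Rightarrow> ('a \<Rightarrow> 'a) \<Rightarrow> ('a \<Rightarrow> 'a) \<Rightarrow> 'a \<Rightarrow> 'a \<Rightarrow> bool" where
  "partial_strong_submonotone T Xi N M uh wh \<longleftrightarrow>
     (\<exists>U. open U \<and> uh \<in> U \<and>
        (\<forall>u\<in>U. \<forall>w\<in>T u.
           (INF us\<in>inv_at T wh. ereal (op_inner N (w - wh) (u - us)
                                      + op_norm2 (\<lambda>x. M x - Xi x) (u - us)))
           \<ge> op_dist2 M u (inv_at T wh)))"

definition strong_submonotone ::
  "('a::real_inner \<Rightarrow> 'a set) \<Rightarrow> ('a \<Rightarrow> 'a) \<Rightarrow> ('a \<Rightarrow> 'a) \<Rightarrow> 'a \<Rightarrow> 'a \<Rightarrow> bool" where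
  "strong_submonotone T N M uh wh \<longleftrightarrow> partial_strong_submonotone T M N M uh wh"

end

theory Submission
  imports Defs
begin

text \<open>Since \<open>M - \<gamma>M = (1 - \<gamma>)M\<close>, the partial condition with \<open>\<Xi> = \<gamma>M\<close> reads
  \<open>\<langle>w - wh, u - u*\<rangle>\<^sub>N + (1 - \<gamma>)\<parallel>u - u*\<parallel>\<^sup>2\<^sub>M \<ge> dist\<^sup>2\<^sub>M(u, S)\<close>, while strong
  submonotonicity for \<open>\<gamma>M\<close> reads \<open>\<langle>w - wh, u - u*\<rangle>\<^sub>N \<ge> \<gamma> dist\<^sup>2\<^sub>M(u, S)\<close>.
  The second implies the first because \<open>\<parallel>u - u*\<parallel>\<^sup>2\<^sub>M \<ge> dist\<^sup>2\<^sub>M(u, S)\<close>;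
  when \<open>S = {uh}\<close> the distance is attained at \<open>uh\<close> and the two coincide.\<close>

lemma op_norm2_nonneg: "pos_semidef M \<Longrightarrow> 0 \<le> op_norm2 M x"
  by (simp add: pos_semidef_def op_norm2_def)

lemma op_norm2_scaleR: "op_norm2 (\<lambda>x. c *\<^sub>R M x) y = c * op_norm2 M y"
  by (simp add: op_norm2_def)

lemma op_norm2_diff_scaleR: "op_norm2 (\<lambda>x. M x - c *\<^sub>R M x) y = (1 - c) * op_norm2 M y"
  by (simp add: op_norm2_def inner_diff_left algebra_simps)

lemma op_norm2_zero: "op_norm2 (\<lambda>x. 0) y = 0"
  by (simp add: op_norm2_def)

lemma op_dist2_singleton: "op_dist2 M u {v} = ereal (op_norm2 M (u - v))"
  by (simp add: op_dist2_def)

lemma op_dist2_real: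
  assumes "pos_semidef M" and "v \<in> A"
  obtains r where "op_dist2 M u A = ereal r" and "0 \<le> r"
    and "\<And>v. v \<in> A \<Longrightarrow> r \<le> op_norm2 M (u - v)"
proof -
  let ?D = "op_dist2 M u A"
  have lower: "\<And>v. v \<in> A \<Longrightarrow> ?D \<le> ereal (op_norm2 M (u - v))"
    unfolding op_dist2_def by (rule INF_lower)
  have "0 \<le> ?D"
    unfolding op_dist2_def by (rule INF_greatest) (simp add: op_norm2_nonneg[OF assms(1)])
  with lower[OF assms(2)] obtain r where "?D = ereal r"
    by (cases ?D) auto
  with lower \<open>0 \<le> ?D\<close> show thesis
    by (intro that) auto
qed

lemma strong_submonotone_iff:
  "strong_submonotone T N M uh wh \<longleftrightarrow>
     (\<exists>U. open U \<and> uh \<in> U \<and>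
        (\<forall>u\<in>U. \<forall>w\<in>T u.
           (INF us\<in>inv_at T wh. ereal (op_inner N (w - wh) (u - us)))
           \<ge> op_dist2 M u (inv_at T wh)))"
  by (simp add: strong_submonotone_def partial_strong_submonotone_def op_norm2_zero)

lemma partial_strong_submonotone_if_strong_submonotone:
  assumes "wh \<in> T uh" and "pos_semidef M" and "0 \<le> \<gamma>" and "\<gamma> \<le> 1"
    and "strong_submonotone T N (\<lambda>x. \<gamma> *\<^sub>R M x) uh wh"
  shows "partial_strong_submonotone T (\<lambda>x. \<gamma> *\<^sub>R M x) N M uh wh"
proof -
  let ?S = "inv_at T wh"
  have "uh \<in> ?S" using assms(1) by (simp add: inv_at_def)
  from assms(5) obtain U where "open U" "uh \<in> U" and strong:
    "\<And>u w. u \<in> U \<Longrightarrow> w \<in> T u \<Longrightarrow>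
       (INF us\<in>?S. ereal (op_inner N (w - wh) (u - us))) \<ge> op_dist2 (\<lambda>x. \<gamma> *\<^sub>R M x) u ?S"
    unfolding strong_submonotone_iff by blast
  show ?thesis unfolding partial_strong_submonotone_def
  proof (intro exI[of _ U] conjI ballI \<open>open U\<close> \<open>uh \<in> U\<close>)
    fix u w assume "u \<in> U" and "w \<in> T u"
    obtain r where dist: "op_dist2 M u ?S = ereal r"
      and r_le: "\<And>v. v \<in> ?S \<Longrightarrow> r \<le> op_norm2 M (u - v)"
      using op_dist2_real[OF assms(2) \<open>uh \<in> ?S\<close>] by blast
    have "ereal (\<gamma> * r) \<le> op_dist2 (\<lambda>x. \<gamma> *\<^sub>R M x) u ?S"
      unfolding op_dist2_def op_norm2_scaleR
      by (rule INF_greatest) (simp add: r_le assms(3) mult_left_mono)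
    also have "\<dots> \<le> (INF us\<in>?S. ereal (op_inner N (w - wh) (u - us)))"
      using strong[OF \<open>u \<in> U\<close> \<open>w \<in> T u\<close>] .
    finally have inner_ge: "\<And>us. us \<in> ?S \<Longrightarrow> \<gamma> * r \<le> op_inner N (w - wh) (u - us)"
      by (meson INF_lower ereal_less_eq(3) order_trans)
    show "op_dist2 M u ?S \<le> (INF us\<in>?S. ereal (op_inner N (w - wh) (u - us)
            + op_norm2 (\<lambda>x. M x - \<gamma> *\<^sub>R M x) (u - us)))"
    proof (rule INF_greatest)
      fix us assume "us \<in> ?S"
      have "(1 - \<gamma>) * r \<le> (1 - \<gamma>) * op_norm2 M (u - us)"
        using r_le[OF \<open>us \<in> ?S\<close>] assms(4) by (simp add: mult_left_mono)
      with inner_ge[OF \<open>us \<in> ?S\<close>] show "op_dist2 M u ?S \<le> ereal (op_inner N (w - wh) (u - us)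
            + op_norm2 (\<lambda>x. M x - \<gamma> *\<^sub>R M x) (u - us))"
        by (simp add: dist op_norm2_diff_scaleR algebra_simps)
    qed
  qed
qed

lemma strong_submonotone_if_partial_strong_submonotone:
  assumes "inv_at T wh = {uh}"
    and "partial_strong_submonotone T (\<lambda>x. \<gamma> *\<^sub>R M x) N M uh wh"
  shows "strong_submonotone T N (\<lambda>x. \<gamma> *\<^sub>R M x) uh wh"
proof -
  from assms(2) obtain U where "open U" "uh \<in> U" and partial:
    "\<And>u w. u \<in> U \<Longrightarrow> w \<in> T u \<Longrightarrow>
       op_norm2 M (u - uh) \<le> op_inner N (w - wh) (u - uh) + (1 - \<gamma>) * op_norm2 M (u - uh)"
    unfolding partial_strong_submonotone_def
    by (simp add: assms(1) op_dist2_singleton op_norm2_diff_scaleR) blast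
  show ?thesis unfolding strong_submonotone_iff
    using partial \<open>open U\<close> \<open>uh \<in> U\<close>
    by (auto simp: assms(1) op_dist2_singleton op_norm2_scaleR algebra_simps)
qed

theorem corollary4p4:
  fixes T :: "'a::{real_inner, complete_space} \<Rightarrow> 'a set"
    and N M :: "'a \<Rightarrow> 'a" and uh wh :: 'a and \<gamma> :: real
  assumes "wh \<in> T uh"
    and "bounded_linear N" and "bounded_linear M" and "pos_semidef M"
    and "0 \<le> \<gamma>" and "\<gamma> \<le> 1"
  shows "(strong_submonotone T N (\<lambda>x. \<gamma> *\<^sub>R M x) uh wh
            \<longrightarrow> partial_strong_submonotone T (\<lambda>x. \<gamma> *\<^sub>R M x) N M uh wh)
       \<and> (inv_at T wh = {uh} \<longrightarrow>
            (strong_submonotone T N (\<lambda>x. \<gamma> *\<^sub>R M x) uh wh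
              \<longleftrightarrow> partial_strong_submonotone T (\<lambda>x. \<gamma> *\<^sub>R M x) N M uh wh))"
  using partial_strong_submonotone_if_strong_submonotone[of wh T uh M \<gamma> N] assms(1,4-6)
    strong_submonotone_if_partial_strong_submonotone[of T wh uh \<gamma> M N]
  by blast

end
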